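(* Let $l$ and $m$ be positive integers, let $n=2^m-1$, let $\pi : (\mathbb Z_2^m)^* \to \mathbb Z_{n}$ be a bijection, let $q\equiv 1\pmod{2n}$ be a prime power, let $\rho$ be a primitive element of $\mathbb F_q$, and let $\Gamma = \operatorname{Cay}(G_{l,m,q},S(\pi))$. Let $g\in(\mathbb Z_2^m)^*$ with $\pi(g)\neq 1$, and let $v=(0,0,0)$ and $w=(0,g,\rho)$ be vertices of $\Gamma$. Then the number of common neighbours of $v$ and $w$ is $$2 + \sum_{\substack{h \in (\mathbb Z_2^m)^* \\ h \ne g}} c^{n}_q\big(\pi(h)-1,\ \pi(h+g)-1\big).$$
   Context: For an additive group $A$, $A^*=A\setminus\{0\}$. $G_{l,m,q} = \mathbb Z_l \oplus \mathbb Z_2^m \oplus \mathbb F_q$. $S_0 = \{(g,0) : g \in (\mathbb Z_l \oplus \mathbb Z_2^m)^*\}$; $S_{z,\pi} = \{(0,z,\rho^j) : j\in\mathbb Z,\ j \equiv \pi(z) \pmod{n}\}$ for $z\in(\mathbb Z_2^m)^*$; $S(\pi) = S_0 \cup \bigcup_z S_{z,\pi}$. $\operatorname{Cay}(G_{l,m,q},S(\pi))$ has vertex set $G_{l,m,q}$, $x\sim y$ iff $y-x\in S(\pi)$. Write $q=2nr+1$; for $i\in\mathbb Z_n$, $C^n_q(i) = \{\rho^{nj+i} : 0\le j\le 2r-1\}$; for $a,b\in\mathbb Z_n$, $c^n_q(a,b) = |(C^n_q(a)+1)\cap C^n_q(b)|$ (indices in $\mathbb Z_n$). *)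

theory Defs
  imports "HOL-Number_Theory.Cong"
begin

text \<open>Z_2^m: functions nat => bool vanishing outside {..<m}; addition is pointwise xor.\<close>
definition Z2m :: "nat \<Rightarrow> (nat \<Rightarrow> bool) set" where
  "Z2m m = {z. \<forall>i\<ge>m. \<not> z i}"

definition z2zero :: "nat \<Rightarrow> bool" where
  "z2zero = (\<lambda>_. False)"

definition z2add :: "(nat \<Rightarrow> bool) \<Rightarrow> (nat \<Rightarrow> bool) \<Rightarrow> (nat \<Rightarrow> bool)" where
  "z2add z y = (\<lambda>i. z i \<noteq> y i)"

text \<open>The group G_{l,m,q} = Z_l + Z_2^m + F_q, elements as triples; Z_l as residues {0..<l}.\<close>
definition Gset :: "nat \<Rightarrow> nat \<Rightarrow> (int \<times> (nat \<Rightarrow> bool) \<times> 'f::field) set" where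
  "Gset l m = {(a, z, x). 0 \<le> a \<and> a < int l \<and> z \<in> Z2m m}"

definition gsub :: "nat \<Rightarrow> (int \<times> (nat \<Rightarrow> bool) \<times> 'f::field) \<Rightarrow> (int \<times> (nat \<Rightarrow> bool) \<times> 'f) \<Rightarrow> (int \<times> (nat \<Rightarrow> bool) \<times> 'f)" where
  "gsub l u v = ((fst u - fst v) mod int l, z2add (fst (snd u)) (fst (snd v)), snd (snd u) - snd (snd v))"

definition primitive_element :: "'f::field \<Rightarrow> bool" where
  "primitive_element \<rho> \<longleftrightarrow> \<rho> \<noteq> 0 \<and> (\<forall>x. x \<noteq> 0 \<longrightarrow> (\<exists>k::nat. x = \<rho> ^ k))"

definition S0 :: "nat \<Rightarrow> nat \<Rightarrow> (int \<times> (nat \<Rightarrow> bool) \<times> 'f::field) set" where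
  "S0 l m = {(a, z, 0) | a z. 0 \<le> a \<and> a < int l \<and> z \<in> Z2m m \<and> (a, z) \<noteq> (0, z2zero)}"

definition Szpi :: "nat \<Rightarrow> ((nat \<Rightarrow> bool) \<Rightarrow> nat) \<Rightarrow> 'f::field \<Rightarrow> (nat \<Rightarrow> bool) \<Rightarrow> (int \<times> (nat \<Rightarrow> bool) \<times> 'f) set" where
  "Szpi n \<pi> \<rho> z = {(0, z, \<rho> powi j) | j::int. [j = int (\<pi> z)] (mod int n)}"

definition Spi :: "nat \<Rightarrow> nat \<Rightarrow> nat \<Rightarrow> ((nat \<Rightarrow> bool) \<Rightarrow> nat) \<Rightarrow> 'f::field \<Rightarrow> (int \<times> (nat \<Rightarrow> bool) \<times> 'f) set" where
  "Spi l m n \<pi> \<rho> = S0 l m \<union> (\<Union>z \<in> Z2m m - {z2zero}. Szpi n \<pi> \<rho> z)"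

definition cay_adj :: "nat \<Rightarrow> nat \<Rightarrow> (int \<times> (nat \<Rightarrow> bool) \<times> 'f::field) set \<Rightarrow> (int \<times> (nat \<Rightarrow> bool) \<times> 'f) \<Rightarrow> (int \<times> (nat \<Rightarrow> bool) \<times> 'f) \<Rightarrow> bool" where
  "cay_adj l m S x y \<longleftrightarrow> x \<in> Gset l m \<and> y \<in> Gset l m \<and> gsub l y x \<in> S"

definition common_neighbours :: "nat \<Rightarrow> nat \<Rightarrow> (int \<times> (nat \<Rightarrow> bool) \<times> 'f::field) set \<Rightarrow> (int \<times> (nat \<Rightarrow> bool) \<times> 'f) \<Rightarrow> (int \<times> (nat \<Rightarrow> bool) \<times> 'f) \<Rightarrow> (int \<times> (nat \<Rightarrow> bool) \<times> 'f) set" where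
  "common_neighbours l m S v w = {u \<in> Gset l m. cay_adj l m S v u \<and> cay_adj l m S w u}"

text \<open>Cyclotomic classes of order n over F_q, q = card (UNIV :: 'f set) = 2nr+1, and cyclotomic numbers.\<close>
definition cyc_class :: "nat \<Rightarrow> 'f::{field,finite} \<Rightarrow> nat \<Rightarrow> 'f set" where
  "cyc_class n \<rho> i = {\<rho> ^ (n * j + i) | j. j < 2 * ((card (UNIV :: 'f set) - 1) div (2 * n))}"

definition cyc_num :: "nat \<Rightarrow> 'f::{field,finite} \<Rightarrow> nat \<Rightarrow> nat \<Rightarrow> nat" where
  "cyc_num n \<rho> a b = card ((\<lambda>x. x + 1) ` cyc_class n \<rho> (a mod n) \<inter> cyc_class n \<rho> (b mod n))"

end

theory Submission
  imports Defs
begin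

text \<open>
  If u \<in> S_0 then u - w lies in some S_{z,\<pi>} with last coordinate -\<rho>; since -1 is an
  n-th power (as 2n divides q - 1), this forces z = h1, the unique element with
  \<pi>(h1) = 1, so u = (0, h1 + g, 0). Symmetrically, u - w \<in> S_0 forces u = (0, h1, \<rho>),
  and \<pi>(g) \<noteq> 1 makes these two vertices distinct. Otherwise u = (0, h, x) with h \<noteq> 0, g,
  x \<in> C(\<pi>(h)) and x - \<rho> \<in> C(\<pi>(h + g)), and the affine map x \<mapsto> 1 - x/\<rho> identifies these
  x with (C(\<pi>(h) - 1) + 1) \<inter> C(\<pi>(h + g) - 1).
\<close>

lemma finite_field_power_card_minus_one:
  fixes x :: "'f::{field,finite}"
  assumes "x \<noteq> 0"
  shows "x ^ (card (UNIV :: 'f set) - 1) = 1"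
proof -
  have card_units: "card (UNIV - {0::'f}) = card (UNIV :: 'f set) - 1"
    by (simp add: card_Diff_subset)
  have "(\<Prod>y\<in>UNIV-{0::'f}. y) = (\<Prod>y\<in>UNIV-{0::'f}. x * y)"
    by (rule prod.reindex_bij_witness[of _ "\<lambda>y. x * y" "\<lambda>y. y / x"]) (use assms in auto)
  also have "\<dots> = x ^ (card (UNIV :: 'f set) - 1) * (\<Prod>y\<in>UNIV-{0::'f}. y)"
    by (simp add: prod.distrib card_units)
  moreover have "(\<Prod>y\<in>UNIV-{0::'f}. y) \<noteq> 0" by simp
  ultimately show ?thesis by (metis mult_cancel_right mult_1)
qed

lemma card_finite_field_ge_two: "card (UNIV :: 'f::{field,finite} set) \<ge> 2"
proof -
  have "card {0::'f, 1} \<le> card (UNIV :: 'f set)" by (rule card_mono) auto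
  thus ?thesis by simp
qed

locale cyclotomic =
  fixes \<rho> :: "'f::{field,finite}" and n N :: nat
  assumes primitive: "primitive_element \<rho>" and n_pos: "n > 0"
    and N_eq: "N = card (UNIV :: 'f set) - 1" and two_n_dvd: "2 * n dvd N"
begin

lemma N_pos: "N > 0"
  using card_finite_field_ge_two[where 'f='f] N_eq by linarith

lemma n_dvd_N: "n dvd N"
  using two_n_dvd by (metis dvd_mult_right)

lemma rho_nonzero: "\<rho> \<noteq> 0"
  using primitive by (simp add: primitive_element_def)

lemma rho_power_N: "\<rho> ^ N = 1"
  using finite_field_power_card_minus_one[OF rho_nonzero] N_eq by simp

lemma rho_power_mod_N: "\<rho> ^ k = \<rho> ^ (k mod N)"
proof -
  have "\<rho> ^ k = (\<rho> ^ N) ^ (k div N) * \<rho> ^ (k mod N)"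
    by (metis power_add power_mult div_mult_mod_eq mult.commute)
  thus ?thesis by (simp add: rho_power_N)
qed

lemma rho_powers_below_N: "(\<lambda>k. \<rho> ^ k) ` {..<N} = UNIV - {0}"
proof
  show "(\<lambda>k. \<rho> ^ k) ` {..<N} \<subseteq> UNIV - {0}" using rho_nonzero by auto
  show "UNIV - {0} \<subseteq> (\<lambda>k. \<rho> ^ k) ` {..<N}"
  proof
    fix x assume "x \<in> (UNIV :: 'f set) - {0}"
    then obtain k :: nat where "x = \<rho> ^ k"
      using primitive unfolding primitive_element_def by auto
    hence "x = \<rho> ^ (k mod N)" using rho_power_mod_N by simp
    thus "x \<in> (\<lambda>k. \<rho> ^ k) ` {..<N}" using N_pos by auto
  qed
qed

lemma rho_power_eq_iff: "\<rho> ^ i = \<rho> ^ j \<longleftrightarrow> i mod N = j mod N"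
proof
  have "card ((\<lambda>k. \<rho> ^ k) ` {..<N}) = card {..<N}"
    unfolding rho_powers_below_N by (simp add: card_Diff_subset N_eq)
  hence inj: "inj_on (\<lambda>k. \<rho> ^ k) {..<N}" by (simp add: eq_card_imp_inj_on)
  assume "\<rho> ^ i = \<rho> ^ j"
  hence "\<rho> ^ (i mod N) = \<rho> ^ (j mod N)" using rho_power_mod_N by metis
  thus "i mod N = j mod N" using inj_onD[OF inj] N_pos by simp
qed (metis rho_power_mod_N)

lemma rho_power_half_N: "\<rho> ^ (N div 2) = -1"
proof -
  let ?x = "\<rho> ^ (N div 2)"
  have "even N" using two_n_dvd by (metis dvd_mult_left)
  hence "N div 2 + N div 2 = N" by auto
  hence "?x * ?x = 1" using rho_power_N by (metis power_add)
  hence "(?x - 1) * (?x + 1) = 0" by (simp add: algebra_simps)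
  moreover have "?x \<noteq> 1"
    using rho_power_eq_iff[of "N div 2" 0] N_pos \<open>even N\<close> by (auto elim: evenE)
  ultimately show ?thesis by (simp add: eq_neg_iff_add_eq_0)
qed

lemma rho_inverse: "inverse \<rho> = \<rho> ^ (N - 1)"
  using rho_power_N N_pos by (intro inverse_unique) (metis power_Suc Suc_diff_1)

text \<open>The cyclotomic class C(i) of the paper, indexed by all of \<nat> instead of \<int>_n.\<close>
definition cyc_coset :: "nat \<Rightarrow> 'f set" where
  "cyc_coset i = {\<rho> ^ k | k. k mod n = i mod n}"

lemma rho_power_in_cyc_coset_iff: "\<rho> ^ k \<in> cyc_coset i \<longleftrightarrow> k mod n = i mod n"
proof
  assume "\<rho> ^ k \<in> cyc_coset i"
  then obtain k' where "\<rho> ^ k = \<rho> ^ k'" "k' mod n = i mod n"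
    unfolding cyc_coset_def by auto
  hence "k mod N mod n = k' mod N mod n" using rho_power_eq_iff by simp
  thus "k mod n = i mod n" using n_dvd_N \<open>k' mod n = i mod n\<close> by (simp add: mod_mod_cancel)
qed (auto simp: cyc_coset_def)

lemma zero_notin_cyc_coset: "0 \<notin> cyc_coset i"
  using rho_nonzero unfolding cyc_coset_def by auto

lemma cyc_coset_cong: "i mod n = j mod n \<Longrightarrow> cyc_coset i = cyc_coset j"
  unfolding cyc_coset_def by simp

lemma cyc_coset_add_multiple: "n dvd d \<Longrightarrow> cyc_coset (i + d) = cyc_coset i"
  by (rule cyc_coset_cong) auto

lemma rho_power_mult_in_cyc_coset:
  assumes "x \<in> cyc_coset i"
  shows "\<rho> ^ k * x \<in> cyc_coset (i + k)"
proof -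
  obtain j where j: "x = \<rho> ^ j" "j mod n = i mod n"
    using assms unfolding cyc_coset_def by auto
  hence "(j + k) mod n = (i + k) mod n" by (metis mod_add_left_eq)
  moreover have "\<rho> ^ k * x = \<rho> ^ (j + k)" using j(1) by (simp add: power_add mult.commute)
  ultimately show ?thesis using rho_power_in_cyc_coset_iff by simp
qed

lemma uminus_in_cyc_coset_iff: "- x \<in> cyc_coset i \<longleftrightarrow> x \<in> cyc_coset i"
proof -
  have closed: "- y \<in> cyc_coset i" if "y \<in> cyc_coset i" for y
  proof -
    have "n dvd N div 2" using two_n_dvd by auto
    moreover have "- y = \<rho> ^ (N div 2) * y" by (simp add: rho_power_half_N)
    ultimately show ?thesis
      using rho_power_mult_in_cyc_coset[OF that] cyc_coset_add_multiple by metis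
  qed
  show ?thesis using closed[of "- x"] closed[of x] by auto
qed

lemma divide_rho_in_cyc_coset_iff: "x / \<rho> \<in> cyc_coset k \<longleftrightarrow> x \<in> cyc_coset (Suc k)"
proof
  assume "x / \<rho> \<in> cyc_coset k"
  hence "\<rho> ^ 1 * (x / \<rho>) \<in> cyc_coset (k + 1)" by (rule rho_power_mult_in_cyc_coset)
  thus "x \<in> cyc_coset (Suc k)" using rho_nonzero by simp
next
  assume "x \<in> cyc_coset (Suc k)"
  hence "\<rho> ^ (N - 1) * x \<in> cyc_coset (Suc k + (N - 1))" by (rule rho_power_mult_in_cyc_coset)
  moreover have "Suc k + (N - 1) = k + N" using N_pos by simp
  ultimately show "x / \<rho> \<in> cyc_coset k"
    using cyc_coset_add_multiple[OF n_dvd_N] rho_inverse by (simp add: divide_inverse mult.commute)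
qed

lemma cyc_class_eq_cyc_coset: "cyc_class n \<rho> (i mod n) = cyc_coset i"
proof
  obtain r where r: "N = 2 * n * r" using two_n_dvd by (elim dvdE)
  have bound: "2 * ((card (UNIV :: 'f set) - 1) div (2 * n)) = N div n"
    using r n_pos N_eq by simp
  show "cyc_class n \<rho> (i mod n) \<subseteq> cyc_coset i"
    unfolding cyc_class_def cyc_coset_def by auto
  show "cyc_coset i \<subseteq> cyc_class n \<rho> (i mod n)"
  proof
    fix x assume "x \<in> cyc_coset i"
    then obtain k where k: "x = \<rho> ^ k" "k mod n = i mod n" unfolding cyc_coset_def by auto
    let ?k = "k mod N"
    have "?k mod n = i mod n" using k n_dvd_N by (simp add: mod_mod_cancel)
    hence decomp: "x = \<rho> ^ (n * (?k div n) + i mod n)"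
      using k(1) rho_power_mod_N by (metis mult_div_mod_eq)
    have "?k < (N div n) * n" using N_pos n_dvd_N by simp
    hence "?k div n < N div n" by (metis less_mult_imp_div_less)
    thus "x \<in> cyc_class n \<rho> (i mod n)"
      unfolding cyc_class_def bound using decomp by blast
  qed
qed

lemma rho_powi_mod_N: "\<rho> powi j = \<rho> ^ nat (j mod int N)"
proof -
  have "\<rho> powi j = \<rho> powi (j mod int N) * (\<rho> powi int N) powi (j div int N)"
    using rho_nonzero by (metis power_int_add power_int_mult mod_mult_div_eq)
  also have "\<rho> powi (j mod int N) = \<rho> ^ nat (j mod int N)"
    using N_pos by (metis power_int_of_nat pos_mod_sign of_nat_0_less_iff nat_0_le)
  finally show ?thesis by (simp add: rho_power_N)
qed

lemma powi_set_eq_cyc_coset: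
  "{\<rho> powi j | j::int. [j = int c] (mod int n)} = cyc_coset c"
proof
  show "{\<rho> powi j | j::int. [j = int c] (mod int n)} \<subseteq> cyc_coset c"
  proof
    fix x assume "x \<in> {\<rho> powi j | j::int. [j = int c] (mod int n)}"
    then obtain j where j: "x = \<rho> powi j" "[j = int c] (mod int n)" by auto
    let ?k = "nat (j mod int N)"
    have "int ?k = j mod int N" using N_pos by simp
    hence "int (?k mod n) = (j mod int N) mod int n" by (metis of_nat_mod)
    also have "\<dots> = int c mod int n"
      using n_dvd_N j(2) by (simp add: mod_mod_cancel cong_def)
    finally have "?k mod n = c mod n" by (metis of_nat_eq_iff of_nat_mod)
    thus "x \<in> cyc_coset c" using j(1) rho_powi_mod_N rho_power_in_cyc_coset_iff by simp
  qed
  show "cyc_coset c \<subseteq> {\<rho> powi j | j::int. [j = int c] (mod int n)}"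
  proof
    fix x assume "x \<in> cyc_coset c"
    then obtain k where k: "x = \<rho> ^ k" "k mod n = c mod n" unfolding cyc_coset_def by auto
    hence "x = \<rho> powi int k" "[int k = int c] (mod int n)"
      by (simp_all add: cong_def flip: of_nat_mod)
    thus "x \<in> {\<rho> powi j | j::int. [j = int c] (mod int n)}" by blast
  qed
qed

lemma card_cyc_coset_minus_rho:
  "card {x. x \<in> cyc_coset i \<and> x - \<rho> \<in> cyc_coset j}
     = card ((\<lambda>y. y + 1) ` cyc_coset (i + n - 1) \<inter> cyc_coset (j + n - 1))"
proof -
  let ?P = "(\<lambda>y. y + 1) ` cyc_coset (i + n - 1) \<inter> cyc_coset (j + n - 1)"
  have pred: "Suc (k + n - 1) mod n = k mod n" for k using n_pos by simp
  have mem: "y \<in> cyc_coset (k + n - 1) \<longleftrightarrow> - (\<rho> * y) \<in> cyc_coset k" for y k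
    using divide_rho_in_cyc_coset_iff[of "\<rho> * y" "k + n - 1"] cyc_coset_cong[OF pred]
      uminus_in_cyc_coset_iff rho_nonzero by simp
  have "{x. x \<in> cyc_coset i \<and> x - \<rho> \<in> cyc_coset j} = (\<lambda>y. \<rho> - \<rho> * y) ` ?P"
  proof (rule set_eqI)
    fix x
    have "x = \<rho> - \<rho> * y \<longleftrightarrow> y = 1 - x / \<rho>" for y
      using rho_nonzero by (auto simp: field_simps)
    hence "x \<in> (\<lambda>y. \<rho> - \<rho> * y) ` ?P \<longleftrightarrow> 1 - x / \<rho> \<in> ?P"
      unfolding image_iff by auto
    also have "\<dots> \<longleftrightarrow> - (x / \<rho>) \<in> cyc_coset (i + n - 1) \<and> 1 - x / \<rho> \<in> cyc_coset (j + n - 1)"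
      using inj_image_mem_iff[OF inj_on_add', of "- (x / \<rho>)" 1] by simp
    also have "\<dots> \<longleftrightarrow> x \<in> cyc_coset i \<and> x - \<rho> \<in> cyc_coset j"
      using mem[of "- (x / \<rho>)" i] mem[of "1 - x / \<rho>" j] rho_nonzero by (simp add: algebra_simps)
    finally show "x \<in> {x. x \<in> cyc_coset i \<and> x - \<rho> \<in> cyc_coset j} \<longleftrightarrow> x \<in> (\<lambda>y. \<rho> - \<rho> * y) ` ?P"
      by simp
  qed
  moreover have "inj_on (\<lambda>y. \<rho> - \<rho> * y) ?P"
    using rho_nonzero by (auto intro: inj_onI)
  ultimately show ?thesis by (simp add: card_image)
qed

end

lemma z2add_zero_right [simp]: "z2add z z2zero = z"
  by (simp add: z2add_def z2zero_def)

lemma z2add_cancel_right [simp]: "z2add (z2add h g) g = h"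
  by (auto simp: z2add_def fun_eq_iff)

lemma z2add_eq_zero_iff: "z2add z g = z2zero \<longleftrightarrow> z = g"
  by (auto simp: z2add_def z2zero_def fun_eq_iff)

lemma z2add_mem_Z2m: "z \<in> Z2m m \<Longrightarrow> g \<in> Z2m m \<Longrightarrow> z2add z g \<in> Z2m m"
  by (auto simp: z2add_def Z2m_def)

lemma z2zero_mem_Z2m: "z2zero \<in> Z2m m"
  by (simp add: z2zero_def Z2m_def)

locale cayley_neighbourhood = cyclotomic \<rho> n N for \<rho> :: "'f::{field,finite}" and n N +
  fixes l m :: nat and \<pi> :: "(nat \<Rightarrow> bool) \<Rightarrow> nat" and g :: "nat \<Rightarrow> bool"
  assumes l_pos: "l > 0"
    and \<pi>_bij: "bij_betw \<pi> (Z2m m - {z2zero}) {..<n}"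
    and g_mem: "g \<in> Z2m m" and \<pi>_g: "\<pi> g \<noteq> 1 mod n"
begin

definition h1 :: "nat \<Rightarrow> bool" where
  "h1 = the_inv_into (Z2m m - {z2zero}) \<pi> (1 mod n)"

lemma h1_mem: "h1 \<in> Z2m m - {z2zero}" and \<pi>_h1: "\<pi> h1 = 1 mod n"
proof -
  have "1 mod n \<in> \<pi> ` (Z2m m - {z2zero})"
    using bij_betw_imp_surj_on[OF \<pi>_bij] n_pos by simp
  then obtain h where h: "h \<in> Z2m m - {z2zero}" "\<pi> h = 1 mod n" by (metis imageE)
  moreover have "h1 = h"
    unfolding h1_def using the_inv_into_f_eq[OF bij_betw_imp_inj_on[OF \<pi>_bij] h(2,1)] .
  ultimately show "h1 \<in> Z2m m - {z2zero}" "\<pi> h1 = 1 mod n" by blast+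
qed

lemma h1_ne_g: "h1 \<noteq> g"
  using \<pi>_h1 \<pi>_g by auto

lemma rho_in_cyc_coset_iff:
  assumes "z \<in> Z2m m - {z2zero}"
  shows "\<rho> \<in> cyc_coset (\<pi> z) \<longleftrightarrow> z = h1"
proof -
  have "\<pi> z < n" using bij_betw_apply[OF \<pi>_bij assms] by simp
  have "\<rho> \<in> cyc_coset (\<pi> z) \<longleftrightarrow> 1 mod n = \<pi> z mod n"
    using rho_power_in_cyc_coset_iff[of 1 "\<pi> z"] by simp
  also have "\<dots> \<longleftrightarrow> \<pi> z = \<pi> h1"
    using \<open>\<pi> z < n\<close> \<pi>_h1 by auto
  also have "\<dots> \<longleftrightarrow> z = h1"
    using inj_on_eq_iff[OF bij_betw_imp_inj_on[OF \<pi>_bij] assms h1_mem] .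
  finally show ?thesis .
qed

lemma mem_Spi_iff:
  "(a, z, x) \<in> Spi l m n \<pi> \<rho> \<longleftrightarrow>
      (x = 0 \<and> 0 \<le> a \<and> a < int l \<and> z \<in> Z2m m \<and> (a, z) \<noteq> (0, z2zero)) \<or>
      (a = 0 \<and> z \<in> Z2m m - {z2zero} \<and> x \<in> cyc_coset (\<pi> z))"
proof -
  have "Szpi n \<pi> \<rho> z = (\<lambda>y. (0, z, y)) ` {\<rho> powi j | j::int. [j = int (\<pi> z)] (mod int n)}"
    for z unfolding Szpi_def by auto
  hence "Szpi n \<pi> \<rho> z = (\<lambda>y. (0, z, y)) ` cyc_coset (\<pi> z)" for z
    by (simp only: powi_set_eq_cyc_coset)
  thus ?thesis unfolding Spi_def S0_def by auto
qed

lemma mem_common_neighbours_iff: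
  "(a, z, x) \<in> common_neighbours l m (Spi l m n \<pi> \<rho>) (0, z2zero, 0) (0, g, \<rho>) \<longleftrightarrow>
     0 \<le> a \<and> a < int l \<and> z \<in> Z2m m \<and>
     (a, z, x) \<in> Spi l m n \<pi> \<rho> \<and> (a, z2add z g, x - \<rho>) \<in> Spi l m n \<pi> \<rho>"
proof (cases "0 \<le> a \<and> a < int l")
  case True
  thus ?thesis using l_pos g_mem z2zero_mem_Z2m
    by (auto simp: common_neighbours_def cay_adj_def gsub_def Gset_def)
qed (auto simp: common_neighbours_def Gset_def)

text \<open>The last coordinates of the common neighbours (0, h, x) with h \<noteq> 0, g.\<close>
definition fibre :: "(nat \<Rightarrow> bool) \<Rightarrow> 'f set" where
  "fibre h = {x. x \<in> cyc_coset (\<pi> h) \<and> x - \<rho> \<in> cyc_coset (\<pi> (z2add h g))}"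

lemma common_neighbour_cases:
  assumes "(a, z, x) \<in> common_neighbours l m (Spi l m n \<pi> \<rho>) (0, z2zero, 0) (0, g, \<rho>)"
  obtains "(a, z, x) = (0, z2add h1 g, 0)" | "(a, z, x) = (0, h1, \<rho>)"
    | "a = 0" "z \<in> Z2m m - {z2zero, g}" "x \<in> fibre z"
proof -
  have in_S: "(a, z, x) \<in> Spi l m n \<pi> \<rho>"
    and shifted_in_S: "(a, z2add z g, x - \<rho>) \<in> Spi l m n \<pi> \<rho>"
    using assms mem_common_neighbours_iff by blast+
  consider "x = 0" | "x = \<rho>" | "x \<noteq> 0" "x \<noteq> \<rho>" by blast
  thus thesis
  proof cases
    case 1
    hence "a = 0" "z2add z g \<in> Z2m m - {z2zero}" "- \<rho> \<in> cyc_coset (\<pi> (z2add z g))"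
      using shifted_in_S rho_nonzero by (auto simp: mem_Spi_iff)
    hence "a = 0" "z = z2add h1 g"
      using rho_in_cyc_coset_iff uminus_in_cyc_coset_iff by (metis z2add_cancel_right)+
    thus thesis using 1 that(1) by simp
  next
    case 2
    hence "a = 0" "z \<in> Z2m m - {z2zero}" "\<rho> \<in> cyc_coset (\<pi> z)"
      using in_S rho_nonzero by (auto simp: mem_Spi_iff)
    thus thesis using 2 rho_in_cyc_coset_iff that(2) by blast
  next
    case 3
    hence "a = 0" "z \<in> Z2m m - {z2zero}" "x \<in> cyc_coset (\<pi> z)"
      "z2add z g \<in> Z2m m - {z2zero}" "x - \<rho> \<in> cyc_coset (\<pi> (z2add z g))"
      using in_S shifted_in_S by (auto simp: mem_Spi_iff)
    thus thesis using that(3) z2add_eq_zero_iff by (auto simp: fibre_def)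
  qed
qed

lemma common_neighbours_eq:
  "common_neighbours l m (Spi l m n \<pi> \<rho>) (0, z2zero, 0) (0, g, \<rho>)
     = {(0, z2add h1 g, 0), (0, h1, \<rho>)}
       \<union> (\<Union>h \<in> Z2m m - {z2zero, g}. (\<lambda>x. (0, h, x)) ` fibre h)"
    (is "?CN = ?R")
proof
  show "?CN \<subseteq> ?R"
  proof
    fix u assume "u \<in> ?CN"
    obtain a z x where u: "u = (a, z, x)" by (cases u)
    have "(a, z, x) \<in> ?R"
      using \<open>u \<in> ?CN\<close> unfolding u by (rule common_neighbour_cases) auto
    thus "u \<in> ?R" unfolding u .
  qed
  have h1_shift: "z2add h1 g \<in> Z2m m - {z2zero}"
    using h1_mem h1_ne_g g_mem z2add_mem_Z2m z2add_eq_zero_iff by auto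
  have rho_h1: "\<rho> \<in> cyc_coset (\<pi> h1)" "- \<rho> \<in> cyc_coset (\<pi> h1)"
    using rho_in_cyc_coset_iff[OF h1_mem] uminus_in_cyc_coset_iff by auto
  show "?R \<subseteq> ?CN"
    using l_pos h1_mem h1_shift rho_h1 g_mem
    by (auto simp: mem_common_neighbours_iff mem_Spi_iff fibre_def z2add_mem_Z2m z2add_eq_zero_iff)
qed

lemma card_common_neighbours:
  "card (common_neighbours l m (Spi l m n \<pi> \<rho>) (0, z2zero, 0) (0, g, \<rho>))
     = 2 + (\<Sum>h \<in> Z2m m - {z2zero, g}. card (fibre h))"
proof -
  let ?H = "Z2m m - {z2zero, g}"
  let ?U = "\<Union>h \<in> ?H. (\<lambda>x. (0::int, h, x)) ` fibre h"
  have "finite (Z2m m - {z2zero})" using bij_betw_finite[OF \<pi>_bij] by simp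
  hence fin: "finite ?H" by (rule finite_subset[rotated]) blast
  have "card ?U = (\<Sum>h \<in> ?H. card ((\<lambda>x. (0::int, h, x)) ` fibre h))"
    by (rule card_UN_disjoint[OF fin]) auto
  also have "\<dots> = (\<Sum>h \<in> ?H. card (fibre h))"
    by (rule sum.cong[OF refl], rule card_image) (simp add: inj_on_def)
  finally have card_U: "card ?U = (\<Sum>h \<in> ?H. card (fibre h))" .
  have "(0, z2add h1 g, 0) \<notin> ?U" "(0, h1, \<rho>) \<notin> ?U"
    using zero_notin_cyc_coset by (auto simp: fibre_def)
  moreover have "(0::int, z2add h1 g, 0) \<noteq> (0, h1, \<rho>)"
    using rho_nonzero by simp
  moreover have "finite ?U" by (rule finite_UN_I[OF fin]) simp
  ultimately have "card ({(0, z2add h1 g, 0), (0, h1, \<rho>)} \<union> ?U) = 2 + card ?U"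
    by simp
  thus ?thesis unfolding common_neighbours_eq card_U .
qed

lemma card_fibre:
  "card (fibre h) = cyc_num n \<rho> (\<pi> h + n - 1) (\<pi> (z2add h g) + n - 1)"
  unfolding fibre_def cyc_num_def cyc_class_eq_cyc_coset
  by (fact card_cyc_coset_minus_rho[of "\<pi> h" "\<pi> (z2add h g)"])

end

theorem proposition2p4:
  fixes l m n :: nat and \<pi> :: "(nat \<Rightarrow> bool) \<Rightarrow> nat" and \<rho> :: "'f::{field,finite}"
    and g :: "nat \<Rightarrow> bool"
  assumes "l > 0" and "m > 0" and "n = 2 ^ m - 1"
    and "bij_betw \<pi> (Z2m m - {z2zero}) {..<n}"
    and "[card (UNIV :: 'f set) = 1] (mod 2 * n)"
    and "primitive_element \<rho>"
    and "g \<in> Z2m m" and "g \<noteq> z2zero" and "\<pi> g \<noteq> 1 mod n"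
  shows "card (common_neighbours l m (Spi l m n \<pi> \<rho>) (0, z2zero, 0) (0, g, \<rho>))
    = 2 + (\<Sum>h \<in> Z2m m - {z2zero, g}.
             cyc_num n \<rho> (\<pi> h + n - 1) (\<pi> (z2add h g) + n - 1))"
proof -
  have "(2::nat) ^ m \<ge> 2 ^ 1" using \<open>m > 0\<close> by (intro power_increasing) auto
  hence "n > 0" using \<open>n = 2 ^ m - 1\<close> by simp
  moreover have "2 * n dvd card (UNIV :: 'f set) - 1"
    using \<open>[card (UNIV :: 'f set) = 1] (mod 2 * n)\<close> by (rule cong_to_1_nat)
  ultimately interpret cayley_neighbourhood \<rho> n "card (UNIV :: 'f set) - 1" l m \<pi> g
    using assms by unfold_locales auto
  show ?thesis using card_common_neighbours card_fibre by simp
qed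

end
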